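(* Let $b\in\mathbb{R}$ and $F(x)=x^2+x$. Consider the three-dimensional map on $\mathbb{R}^3$ $$w_{k+1}=w_k-\big(F(x_k+w_k)-F(x_k)\big)+z_k=-w_k^2-2x_kw_k+z_k,\qquad z_{k+1}=bw_k,\qquad x_{k+1}=x_k+w_k$$ (this is the map of a discrete-time memristor Murali-Lakshmanan-Chua circuit, or its dual, with step size $h=1$, $\alpha=\beta=1$, $\gamma=b$ and memristor nonlinearity $F$). Then $\Theta(x,w,z)=w+z-bx+x+x^2$ is a first integral of the map, so $\mathbb{R}^3$ is foliated into the invariant sets $\mathcal{M}(a)=\{(x,w,z)\in\mathbb{R}^3:\Theta(x,w,z)=a\}$, $a\in\mathbb{R}$, and for every $a\in\mathbb{R}$, along any orbit lying in $\mathcal{M}(a)$, setting $y_k=\sum_{j=0}^{k-1}z_j-z_0+bx_0$, the pair $(x_k,y_k)$ obeys the Hénon map $$x_{k+1}=-x_k^2+y_k+a,\qquad y_{k+1}=bx_k.$$ In particular, for every $a\in\mathbb{R}$ the dynamics of this Hénon map with parameters $a,b$ is embedded in the invariant set $\mathcal{M}(a)$.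
   Context: The map $(x,y)\mapsto(-x^2+y+a,\,bx)$ is topologically conjugate to the classical Hénon map $(X,Y)\mapsto(1-aX^2+Y,\,bX)$ via $x=aX$, $y=aY$ (for $a\neq0$). The sequence $y_k$ corresponds to the shifted incremental charge (or flux) variable of the circuit in the flux-charge domain. *)

theory Defs
  imports Main "HOL.Real"
begin

definition Fm :: "real \<Rightarrow> real" where
  "Fm x = x^2 + x"

definition mlc_map :: "real \<Rightarrow> real \<times> real \<times> real \<Rightarrow> real \<times> real \<times> real" where
  "mlc_map b p = (case p of (x, w, z) \<Rightarrow>
      (x + w, w - (Fm (x + w) - Fm x) + z, b * w))"

definition Theta :: "real \<Rightarrow> real \<times> real \<times> real \<Rightarrow> real" where
  "Theta b p = (case p of (x, w, z) \<Rightarrow> w + z - b * x + x + x^2)"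

definition Mset :: "real \<Rightarrow> real \<Rightarrow> (real \<times> real \<times> real) set" where
  "Mset b a = {p. Theta b p = a}"

end

theory Submission
  imports Defs
begin

text \<open>Writing Theta = w + z - b x + F(x), one step adds -(F(x') - F(x)) + z to w,
  replaces z by b w and adds b w to b x, so Theta is conserved. Summing z_{j+1} = b w_j
  telescopes, so the shifted charge satisfies y_{k+1} = b x_k and hence y_k = b x_k - z_k;
  the level-set equation Theta = a expresses w_k through x_k, z_k and a, and substituting
  it into x_{k+1} = x_k + w_k gives the Henon recursion.\<close>

lemma mlc_map_eq:
  "mlc_map b (x, w, z) = (x + w, - (w^2) - 2 * x * w + z, b * w)"
  by (simp add: mlc_map_def Fm_def power2_eq_square algebra_simps)

lemma fst_mlc_map [simp]: "fst (mlc_map b p) = fst p + fst (snd p)"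
  by (cases p) (simp add: mlc_map_def)

lemma snd_snd_mlc_map [simp]: "snd (snd (mlc_map b p)) = b * fst (snd p)"
  by (cases p) (simp add: mlc_map_def)

lemma Theta_mlc_map: "Theta b (mlc_map b p) = Theta b p"
  by (cases p) (simp add: mlc_map_eq Theta_def power2_eq_square algebra_simps)

lemma mlc_map_Mset_subset: "mlc_map b ` Mset b a \<subseteq> Mset b a"
  by (auto simp: Mset_def Theta_mlc_map)

definition charge :: "real \<Rightarrow> (nat \<Rightarrow> real \<times> real \<times> real) \<Rightarrow> nat \<Rightarrow> real" where
  "charge b orb k = (\<Sum>j<k. snd (snd (orb j))) - snd (snd (orb 0)) + b * fst (orb 0)"

context
  fixes b :: real and orb :: "nat \<Rightarrow> real \<times> real \<times> real"
  assumes orbit: "\<And>k. orb (Suc k) = mlc_map b (orb k)"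
begin

lemma charge_Suc_orbit: "charge b orb (Suc k) = b * fst (orb k)"
proof (induction k)
  case 0
  then show ?case by (simp add: charge_def)
next
  case (Suc k)
  have "charge b orb (Suc (Suc k)) = charge b orb (Suc k) + snd (snd (orb (Suc k)))"
    by (simp add: charge_def)
  also have "\<dots> = b * fst (orb (Suc k))"
    using Suc.IH by (simp add: orbit algebra_simps)
  finally show ?case .
qed

lemma charge_orbit: "charge b orb k = b * fst (orb k) - snd (snd (orb k))"
proof (cases k)
  case 0
  then show ?thesis by (simp add: charge_def)
next
  case (Suc m)
  then show ?thesis by (simp add: charge_Suc_orbit orbit algebra_simps)
qed

lemma henon_orbit:
  assumes "orb k \<in> Mset b a"
  shows "fst (orb (Suc k)) = - ((fst (orb k))^2) + charge b orb k + a"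
proof -
  have "fst (snd (orb k)) = a - snd (snd (orb k)) + b * fst (orb k) - fst (orb k) - (fst (orb k))^2"
    using assms by (cases "orb k") (simp add: Mset_def Theta_def)
  then show ?thesis by (simp add: orbit charge_orbit)
qed

end

theorem mainTheorem6:
  fixes b :: real
  shows "(\<forall>x w z. mlc_map b (x, w, z) = (x + w, - (w^2) - 2 * x * w + z, b * w))
       \<and> (\<forall>p. Theta b (mlc_map b p) = Theta b p)
       \<and> (\<forall>a. mlc_map b ` Mset b a \<subseteq> Mset b a)
       \<and> (\<forall>a (orb :: nat \<Rightarrow> real \<times> real \<times> real).
            (\<forall>k. orb (Suc k) = mlc_map b (orb k)) \<longrightarrow> (\<forall>k. orb k \<in> Mset b a) \<longrightarrow>
            (let xs = (\<lambda>k. fst (orb k));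
                 zs = (\<lambda>k. snd (snd (orb k)));
                 ys = (\<lambda>k. (\<Sum>j<k. zs j) - zs 0 + b * xs 0)
             in \<forall>k. xs (Suc k) = - ((xs k)^2) + ys k + a \<and> ys (Suc k) = b * xs k))"
proof (intro conjI allI impI)
  fix a and orb :: "nat \<Rightarrow> real \<times> real \<times> real"
  assume "\<forall>k. orb (Suc k) = mlc_map b (orb k)" and "\<forall>k. orb k \<in> Mset b a"
  then show "let xs = (\<lambda>k. fst (orb k));
                 zs = (\<lambda>k. snd (snd (orb k)));
                 ys = (\<lambda>k. (\<Sum>j<k. zs j) - zs 0 + b * xs 0)
             in \<forall>k. xs (Suc k) = - ((xs k)^2) + ys k + a \<and> ys (Suc k) = b * xs k"
    using henon_orbit charge_Suc_orbit unfolding Let_def charge_def by blast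
qed (simp_all add: mlc_map_eq Theta_mlc_map mlc_map_Mset_subset)

end
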